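(* Fix an integer $k\ge1$ and let $o^{(k)}_{n,i}$ be the probability that a random Bernoulli text of length $n$ contains exactly $i$ clumps of $w$ that consist of exactly $k$ occurrences of $w$ ($k$-clumps). Define $$\mathfrak{K}^{(k)}(z,v)=\pi_w z^{\ell}\left(\frac{1}{1-K(z)}+(v-1)K(z)^{k-1}\right).$$ Then $$\sum_{n,i\ge0}o^{(k)}_{n,i}\,v^i z^n=N(z)+\frac{R(z)}{\pi_w z^{\ell}}\,\mathfrak{K}^{(k)}(z,v)\,\frac{1}{1-\dfrac{M(z)-K(z)}{\pi_w z^{\ell}}\,\mathfrak{K}^{(k)}(z,v)}\,U(z).$$
   Context: Let $\mathcal{A}$ be a finite alphabet with $|\mathcal{A}|\ge2$ and $w\in\mathcal{A}^*$ a fixed word of length $\ell=|w|\ge 2$. Bernoulli model: each letter $a$ has probability $p_a>0$, $\sum_a p_a=1$, $\mathbf{P}(a_1\cdots a_n)=\prod_i p_{a_i}$; for a language $L$, $L(z)=\sum_{x\in L}\mathbf{P}(x)z^{|x|}$; $\pi_w=\mathbf{P}(w)$. Occurrences of $w$ are position intervals where $w$ appears; two occurrences overlap if their intervals share a position; clumps are equivalence classes of occurrences under the transitive closure of overlapping; a $k$-clump is a clump containing exactly $k$ occurrences. Autocorrelation set $\mathcal{C}=\{\epsilon\}\cup\{e\in\mathcal{A}^+: |e|<\ell,\ \exists e'\in\mathcal{A}^+,\ we=e'w\}$, $\mathcal{C}_\circ=\mathcal{C}\setminus\{\epsilon\}$, $\mathcal{K}=\mathcal{C}_\circ\setminus\mathcal{C}_\circ\mathcal{A}^+$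 with generating function $K(z)$. Languages: $\mathcal{R}=\{r\in\mathcal{A}^*w: \text{no } r=xwy,\ |y|>0\}$; $\mathcal{M}=\{m\in\mathcal{A}^+: wm\in\mathcal{A}^*w,\ \text{no } wm=xwy,\ |x|>0,|y|>0\}$; $\mathcal{U}=\{u\in\mathcal{A}^*: \text{no } wu=xwy,\ |x|>0\}$; $\mathcal{N}=\{n: w\text{ not a factor of }n\}$, with generating functions $R,M,U,N$; explicitly, with $C(z)$ the generating function of $\mathcal{C}$ and $D(z)=\pi_w z^{\ell}+(1-z)C(z)$: $R=\pi_w z^\ell/D$, $M=1+(z-1)/D$, $U=1/D$, $N=C/D$. *)

theory Defs
  imports "HOL-Computational_Algebra.Formal_Power_Series"
begin

text \<open>Words are lists over a finite alphabet type 'a. Positions are 0-based.\<close>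

definition wprob :: "('a \<Rightarrow> real) \<Rightarrow> 'a list \<Rightarrow> real" where
  "wprob p x = prod_list (map p x)"

definition lang_gf :: "('a \<Rightarrow> real) \<Rightarrow> 'a list set \<Rightarrow> complex fps" where
  "lang_gf p L = Abs_fps (\<lambda>n. of_real (\<Sum>x\<in>{x\<in>L. length x = n}. wprob p x))"

definition occs :: "'a list \<Rightarrow> 'a list \<Rightarrow> nat set" where
  "occs w t = {j. j + length w \<le> length t \<and> take (length w) (drop j t) = w}"

definition overlap :: "'a list \<Rightarrow> nat \<Rightarrow> nat \<Rightarrow> bool" where
  "overlap w j j' \<longleftrightarrow> j < j' + length w \<and> j' < j + length w"

definition clump_rel :: "'a list \<Rightarrow> 'a list \<Rightarrow> nat rel" where
  "clump_rel w t = {(j, j'). j \<in> occs w t \<and> j' \<in> occs w t \<and> overlap w j j'}\<^sup>*"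

definition clumps :: "'a list \<Rightarrow> 'a list \<Rightarrow> nat set set" where
  "clumps w t = occs w t // clump_rel w t"

definition num_kclumps :: "nat \<Rightarrow> 'a list \<Rightarrow> 'a list \<Rightarrow> nat" where
  "num_kclumps k w t = card {c \<in> clumps w t. card c = k}"

definition kclump_prob :: "('a \<Rightarrow> real) \<Rightarrow> 'a list \<Rightarrow> nat \<Rightarrow> nat \<Rightarrow> nat \<Rightarrow> real" where
  "kclump_prob p w k n i = (\<Sum>t\<in>{t. length t = n \<and> num_kclumps k w t = i}. wprob p t)"

definition autocorr :: "'a list \<Rightarrow> 'a list set" where
  "autocorr w = {[]} \<union> {e. e \<noteq> [] \<and> length e < length w \<and> (\<exists>e'. e' \<noteq> [] \<and> w @ e = e' @ w)}"

definition autocorr0 :: "'a list \<Rightarrow> 'a list set" where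
  "autocorr0 w = autocorr w - {[]}"

definition Klang :: "'a list \<Rightarrow> 'a list set" where
  "Klang w = {e \<in> autocorr0 w. \<not> (\<exists>c\<in>autocorr0 w. \<exists>u. u \<noteq> [] \<and> e = c @ u)}"

definition Rlang :: "'a list \<Rightarrow> 'a list set" where
  "Rlang w = {r. (\<exists>x. r = x @ w) \<and> \<not> (\<exists>x y. r = x @ w @ y \<and> y \<noteq> [])}"

definition Mlang :: "'a list \<Rightarrow> 'a list set" where
  "Mlang w = {m. m \<noteq> [] \<and> (\<exists>x. w @ m = x @ w) \<and>
                 \<not> (\<exists>x y. w @ m = x @ w @ y \<and> x \<noteq> [] \<and> y \<noteq> [])}"

definition Ulang :: "'a list \<Rightarrow> 'a list set" where
  "Ulang w = {u. \<not> (\<exists>x y. w @ u = x @ w @ y \<and> x \<noteq> [])}"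

definition Nlang :: "'a list \<Rightarrow> 'a list set" where
  "Nlang w = {n. \<not> (\<exists>x y. n = x @ w @ y)}"

definition piz :: "('a \<Rightarrow> real) \<Rightarrow> 'a list \<Rightarrow> complex fps" where
  "piz p w = fps_const (of_real (wprob p w)) * fps_X ^ length w"

text \<open>The series frak K^(k)(z,v), for a fixed complex value of v.\<close>
definition frakK :: "('a \<Rightarrow> real) \<Rightarrow> 'a list \<Rightarrow> nat \<Rightarrow> complex \<Rightarrow> complex fps" where
  "frakK p w k v = piz p w *
     (1 / (1 - lang_gf p (Klang w)) + fps_const (v - 1) * lang_gf p (Klang w) ^ (k - 1))"

end

theory Submission
  imports Defs
begin

(*
  Let Ends w be the words ending with w.  The last occurrence of w in such a
  word belongs to its "last clump"; all other clumps are closed and can no longer grow when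
  letters are appended.  Weighting each word by its probability times v^(number of k-clumps),
  consider the series

    T  of all texts,                   H  of the words in Ends w,
    A  of the words in Ends w, counting only their closed k-clumps,
    G  the part of A whose words have a last clump consisting of a single occurrence.

  Appending a word of K to a word of Ends w enlarges its last clump by one occurrence, so the
  part of A with last clump of size k is G K^(k-1).  The unique factorisations of words at
  occurrences of w then give the linear system
    T = N + H U,   A = G + A K,   G = R + H (M - K),   H = A + (v - 1) G K^(k-1),
  whose solution is the closed form of the theorem.
*)

unbundle fps_syntax

section \<open>Clumps of a set of positions\<close>

definition overlap_graph :: "nat \<Rightarrow> nat set \<Rightarrow> nat rel" where
  "overlap_graph l S = {(a, b). a \<in> S \<and> b \<in> S \<and> a < b + l \<and> b < a + l}"

definition clumps_of :: "nat \<Rightarrow> nat set \<Rightarrow> nat set set" where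
  "clumps_of l S = S // (overlap_graph l S)\<^sup>*"

lemma clumps_eq_clumps_of: "clumps w t = clumps_of (length w) (occs w t)"
  unfolding clumps_def clump_rel_def overlap_def clumps_of_def overlap_graph_def by simp

lemma overlap_graph_sym: "(x, y) \<in> overlap_graph l S \<longleftrightarrow> (y, x) \<in> overlap_graph l S"
  unfolding overlap_graph_def by auto

lemma overlap_graph_rtrancl_sym:
  "(x, y) \<in> (overlap_graph l S)\<^sup>* \<Longrightarrow> (y, x) \<in> (overlap_graph l S)\<^sup>*"
  using sym_rtrancl[of "overlap_graph l S"] overlap_graph_sym
  by (auto simp: sym_def)

lemma overlap_graph_rtrancl_mem:
  "(x, y) \<in> (overlap_graph l S)\<^sup>* \<Longrightarrow> x \<in> S \<Longrightarrow> y \<in> S"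
  by (induction rule: rtrancl_induct) (auto simp: overlap_graph_def)

lemma overlap_graph_rtrancl_mono:
  "S \<subseteq> S' \<Longrightarrow> (x, y) \<in> (overlap_graph l S)\<^sup>* \<Longrightarrow> (x, y) \<in> (overlap_graph l S')\<^sup>*"
  by (rule rtrancl_mono[THEN subsetD, of "overlap_graph l S"]) (auto simp: overlap_graph_def)

lemma clumps_of_eq_component:
  assumes "X \<in> clumps_of l S" "x \<in> X"
  shows "X = (overlap_graph l S)\<^sup>* `` {x}"
  using assms unfolding clumps_of_def
proof (elim quotientE)
  fix z assume X: "X = (overlap_graph l S)\<^sup>* `` {z}" and "x \<in> X"
  then have zx: "(z, x) \<in> (overlap_graph l S)\<^sup>*" by simp
  show ?thesis unfolding X
    using rtrancl_trans[OF zx] rtrancl_trans[OF overlap_graph_rtrancl_sym[OF zx]] by blast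
qed

lemma component_in_clumps_of:
  "x \<in> S \<Longrightarrow> (overlap_graph l S)\<^sup>* `` {x} \<in> clumps_of l S"
  unfolding clumps_of_def by (rule quotientI)

lemma clumps_of_sub: "X \<in> clumps_of l S \<Longrightarrow> X \<subseteq> S"
  unfolding clumps_of_def by (erule quotientE) (use overlap_graph_rtrancl_mem in blast)

lemma clumps_of_nonempty: "X \<in> clumps_of l S \<Longrightarrow> X \<noteq> {}"
  unfolding clumps_of_def by (erule quotientE) blast

lemma clumps_of_connected:
  "X \<in> clumps_of l S \<Longrightarrow> x \<in> X \<Longrightarrow> y \<in> X \<Longrightarrow> (x, y) \<in> (overlap_graph l S)\<^sup>*"
  using clumps_of_eq_component by blast

lemma clumps_of_closed:
  "(x, y) \<in> overlap_graph l S \<Longrightarrow> X \<in> clumps_of l S \<Longrightarrow> x \<in> X \<Longrightarrow> y \<in> X"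
  using clumps_of_eq_component by blast

lemma clumps_of_disjoint:
  "X \<in> clumps_of l S \<Longrightarrow> Y \<in> clumps_of l S \<Longrightarrow> x \<in> X \<Longrightarrow> x \<in> Y \<Longrightarrow> X = Y"
  using clumps_of_eq_component by blast

lemma clumps_of_finite: "finite S \<Longrightarrow> finite (clumps_of l S)"
  by (rule finite_subset[of _ "Pow S"]) (use clumps_of_sub in auto)

lemma clumps_of_empty: "clumps_of l {} = {}"
  unfolding clumps_of_def quotient_def by simp

lemma partition_is_quotient:
  assumes "\<And>X. X \<in> P \<Longrightarrow> X \<subseteq> S" "\<And>X. X \<in> P \<Longrightarrow> X \<noteq> {}" "\<And>x. x \<in> S \<Longrightarrow> \<exists>X\<in>P. x \<in> X"
    "\<And>X x y. X \<in> P \<Longrightarrow> x \<in> X \<Longrightarrow> y \<in> X \<Longrightarrow> (x, y) \<in> B\<^sup>*"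
    "\<And>x y X. (x, y) \<in> B \<Longrightarrow> X \<in> P \<Longrightarrow> x \<in> X \<Longrightarrow> y \<in> X"
  shows "S // B\<^sup>* = P"
proof -
  have block: "B\<^sup>* `` {x} = X" if "X \<in> P" "x \<in> X" for X x
  proof
    show "B\<^sup>* `` {x} \<subseteq> X"
    proof
      fix y assume "y \<in> B\<^sup>* `` {x}"
      then have "(x, y) \<in> B\<^sup>*" by simp
      then show "y \<in> X" by (induction rule: rtrancl_induct) (use that assms(5) in blast)+
    qed
    show "X \<subseteq> B\<^sup>* `` {x}" using assms(4) that by blast
  qed
  show ?thesis
  proof
    show "S // B\<^sup>* \<subseteq> P"
      unfolding quotient_def using assms(3) block by fastforce
    show "P \<subseteq> S // B\<^sup>*"
    proof
      fix X assume X: "X \<in> P"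
      then obtain x where "x \<in> X" using assms(2) by blast
      then show "X \<in> S // B\<^sup>*" unfolding quotient_def using block X assms(1) by blast
    qed
  qed
qed

lemma clumps_of_insert:
  fixes l p :: nat and S :: "nat set"
  assumes p: "p \<notin> S"
  defines "Adj \<equiv> {X \<in> clumps_of l S. \<exists>y\<in>X. (p, y) \<in> overlap_graph l (insert p S)}"
  shows "clumps_of l (insert p S) = insert (insert p (\<Union>Adj)) (clumps_of l S - Adj)"
proof -
  let ?G = "overlap_graph l S" and ?G' = "overlap_graph l (insert p S)"
  let ?C = "insert p (\<Union>Adj)"
  have mono: "(x, y) \<in> ?G'\<^sup>*" if "(x, y) \<in> ?G\<^sup>*" for x y
    using overlap_graph_rtrancl_mono[OF _ that] by blast
  have Adj_sub: "\<Union>Adj \<subseteq> S" using clumps_of_sub unfolding Adj_def by blast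
  have to_p: "(x, p) \<in> ?G'\<^sup>*" if x: "x \<in> ?C" for x
  proof (cases "x = p")
    case False
    then obtain X y where X: "X \<in> clumps_of l S" "x \<in> X" "y \<in> X" "(p, y) \<in> ?G'"
      using x unfolding Adj_def by blast
    then have "(x, y) \<in> ?G'\<^sup>*" using clumps_of_connected mono by blast
    moreover have "(y, p) \<in> ?G'" using X(4) overlap_graph_sym by blast
    ultimately show ?thesis by (rule rtrancl_into_rtrancl)
  qed simp
  have neighbour_in_C: "z \<in> \<Union>Adj" if "z \<in> S" "(p, z) \<in> ?G'" for z
    using component_in_clumps_of[OF that(1), of l] that unfolding Adj_def by blast
  show ?thesis
    unfolding clumps_of_def[of l "insert p S"]
  proof (rule partition_is_quotient)
    fix X assume "X \<in> insert ?C (clumps_of l S - Adj)"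
    then show "X \<subseteq> insert p S" using Adj_sub clumps_of_sub by blast
  next
    fix X assume "X \<in> insert ?C (clumps_of l S - Adj)"
    then show "X \<noteq> {}" using clumps_of_nonempty by blast
  next
    fix x assume x: "x \<in> insert p S"
    show "\<exists>X\<in>insert ?C (clumps_of l S - Adj). x \<in> X"
    proof (cases "x = p")
      case False
      let ?Y = "?G\<^sup>* `` {x}"
      have "?Y \<in> clumps_of l S" "x \<in> ?Y" using component_in_clumps_of[of x S l] x False by auto
      then show ?thesis by (cases "?Y \<in> Adj") auto
    qed simp
  next
    fix X x y assume X: "X \<in> insert ?C (clumps_of l S - Adj)" and xy: "x \<in> X" "y \<in> X"
    show "(x, y) \<in> ?G'\<^sup>*"
    proof (cases "X = ?C")
      case True
      then show ?thesis
        using to_p[of x] overlap_graph_rtrancl_sym[OF to_p[of y]] xy by (blast intro: rtrancl_trans)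
    next
      case False
      then show ?thesis using X clumps_of_connected mono xy by blast
    qed
  next
    fix x y X assume xy: "(x, y) \<in> ?G'" and X: "X \<in> insert ?C (clumps_of l S - Adj)"
      and x: "x \<in> X"
    show "y \<in> X"
    proof (cases "x = p \<or> y = p")
      case True
      have "X = ?C"
      proof (rule ccontr)
        assume "X \<noteq> ?C"
        then have X': "X \<in> clumps_of l S" "X \<notin> Adj" using X by auto
        then have "x \<noteq> p" using x p clumps_of_sub by blast
        then have "(p, x) \<in> ?G'" using True xy overlap_graph_sym by blast
        then show False using X' x unfolding Adj_def by blast
      qed
      moreover have "y \<in> \<Union>Adj" if "y \<noteq> p"
      proof -
        have "x = p" "y \<in> S" using True that xy unfolding overlap_graph_def by auto
        then show ?thesis using neighbour_in_C xy by blast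
      qed
      ultimately show ?thesis by blast
    next
      case False
      then have edge: "(x, y) \<in> ?G" using xy unfolding overlap_graph_def by auto
      show ?thesis
      proof (cases "X = ?C")
        case True
        then obtain Y where "Y \<in> Adj" "x \<in> Y" using x False by auto
        then show ?thesis using True clumps_of_closed[OF edge] unfolding Adj_def by blast
      next
        case False
        then show ?thesis using X x clumps_of_closed[OF edge] by blast
      qed
    qed
  qed
qed

lemma clumps_of_insert_isolated:
  assumes "\<And>x. x \<in> S \<Longrightarrow> x + l \<le> p" "0 < l"
  shows "clumps_of l (insert p S) = insert {p} (clumps_of l S)"
proof -
  have "p \<notin> S" using assms by force
  moreover have "(p, y) \<notin> overlap_graph l (insert p S)" if "y \<in> S" for y
    using assms(1)[OF that] unfolding overlap_graph_def by simp
  ultimately show ?thesis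
    using clumps_of_insert[of p S l] clumps_of_sub by (auto simp: subset_iff)
qed

lemma clumps_of_insert_adjacent:
  fixes l p q :: nat and S :: "nat set"
  assumes q: "q \<in> S" "\<And>x. x \<in> S \<Longrightarrow> x \<le> q" and qp: "q < p" "p < q + l"
  defines "C \<equiv> (overlap_graph l S)\<^sup>* `` {q}"
  shows "clumps_of l (insert p S) = insert (insert p C) (clumps_of l S - {C})"
proof -
  let ?G' = "overlap_graph l (insert p S)"
  have p: "p \<notin> S" using q qp by force
  have C: "C \<in> clumps_of l S" "q \<in> C" unfolding C_def using component_in_clumps_of[OF q(1)] by auto
  have "{X \<in> clumps_of l S. \<exists>y\<in>X. (p, y) \<in> ?G'} = {C}"
  proof (intro equalityI subsetI)
    fix X assume "X \<in> {X \<in> clumps_of l S. \<exists>y\<in>X. (p, y) \<in> ?G'}"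
    then obtain y where X: "X \<in> clumps_of l S" "y \<in> X" "(p, y) \<in> ?G'" by blast
    have "y \<in> S" using X clumps_of_sub p by blast
    then have "(q, y) \<in> overlap_graph l S"
      using X(3) q qp unfolding overlap_graph_def by force
    then have "y \<in> C" using clumps_of_closed C by blast
    then show "X \<in> {C}" using clumps_of_disjoint X C(1) by blast
  next
    fix X assume "X \<in> {C}"
    moreover have "(p, q) \<in> ?G'" using q qp unfolding overlap_graph_def by simp
    ultimately show "X \<in> {X \<in> clumps_of l S. \<exists>y\<in>X. (p, y) \<in> ?G'}" using C by blast
  qed
  then show ?thesis using clumps_of_insert[OF p, of l] by simp
qed


section \<open>Occurrences of w and factorisations of words\<close>

lemma occs_iff_split: "j \<in> occs w t \<longleftrightarrow> (\<exists>x y. t = x @ w @ y \<and> length x = j)"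
proof
  assume "j \<in> occs w t"
  then have j: "j + length w \<le> length t" "take (length w) (drop j t) = w"
    unfolding occs_def by auto
  have "t = take j t @ take (length w) (drop j t) @ drop (length w) (drop j t)"
    by (simp only: append_take_drop_id)
  then have "t = take j t @ w @ drop (length w) (drop j t)" using j(2) by simp
  moreover have "length (take j t) = j" using j(1) by simp
  ultimately show "\<exists>x y. t = x @ w @ y \<and> length x = j" by blast
next
  assume "\<exists>x y. t = x @ w @ y \<and> length x = j"
  then show "j \<in> occs w t" unfolding occs_def by auto
qed

lemma occs_le: "j \<in> occs w t \<Longrightarrow> j + length w \<le> length t"
  unfolding occs_def by simp

lemma occs_finite: "finite (occs w t)"
  by (rule finite_subset[of _ "{..length t}"]) (auto simp: occs_def)

lemma occs_append: "j \<in> occs w s \<Longrightarrow> j \<in> occs w (s @ m)"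
  unfolding occs_iff_split by (metis append.assoc)

lemma occs_append_early:
  "j \<in> occs w (s @ m) \<Longrightarrow> j + length w \<le> length s \<Longrightarrow> j \<in> occs w s"
  unfolding occs_def by (simp add: drop_append take_append)

lemma occs_append_late:
  assumes "j \<in> occs w (x0 @ w @ m)" "length x0 + length w < j + length w"
  shows "\<exists>x y. w @ m = x @ w @ y \<and> x \<noteq> [] \<and> length x = j - length x0"
proof -
  obtain x y where xy: "x0 @ w @ m = x @ w @ y" "length x = j" using assms(1) occs_iff_split by blast
  have "w @ m = drop (length x0) x @ w @ y"
    using arg_cong[OF xy(1), of "drop (length x0)"] xy(2) assms(2) by simp
  then show ?thesis using xy(2) assms(2) by (intro exI[of _ "drop (length x0) x"] exI[of _ y]) auto
qed

definition Ends :: "'a list \<Rightarrow> 'a list set" where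
  "Ends w = {s. \<exists>x. s = x @ w}"

lemma Ends_last_occ: "s \<in> Ends w \<Longrightarrow> length s - length w \<in> occs w s"
  unfolding Ends_def occs_def by auto

lemma Ends_length: "s \<in> Ends w \<Longrightarrow> length w \<le> length s"
  unfolding Ends_def by auto

lemma Ends_Max_occs: "s \<in> Ends w \<Longrightarrow> Max (occs w s) = length s - length w"
  by (rule Max_eqI) (use occs_finite Ends_last_occ occs_le in fastforce)+

lemma Mlang_nonempty: "m \<in> Mlang w \<Longrightarrow> m \<noteq> []"
  unfolding Mlang_def by blast

lemma Ends_append_Mlang: "s \<in> Ends w \<Longrightarrow> m \<in> Mlang w \<Longrightarrow> s @ m \<in> Ends w"
proof -
  assume "s \<in> Ends w" "m \<in> Mlang w"
  then obtain x x' where "s = x @ w" "w @ m = x' @ w" unfolding Ends_def Mlang_def by blast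
  then have "s @ m = (x @ x') @ w" by simp
  then show ?thesis unfolding Ends_def by blast
qed

lemma occs_append_Mlang:
  assumes s: "s \<in> Ends w" and m: "m \<in> Mlang w"
  shows "occs w (s @ m) = insert (length (s @ m) - length w) (occs w s)"
    and "length (s @ m) - length w \<notin> occs w s"
proof -
  obtain x0 where x0: "s = x0 @ w" using s Ends_def by blast
  have late: "j = length (s @ m) - length w"
    if j: "j \<in> occs w (s @ m)" "\<not> j + length w \<le> length s" for j
  proof -
    have "j \<in> occs w (x0 @ w @ m)" "length x0 + length w < j + length w" using j x0 by auto
    then obtain x y where xy: "w @ m = x @ w @ y" "x \<noteq> []" "length x = j - length x0"
      by (blast dest: occs_append_late)
    then have "y = []" using m unfolding Mlang_def by blast
    then show ?thesis using arg_cong[OF xy(1), of length] xy(3) x0 j(2) by simp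
  qed
  have new: "length (s @ m) - length w \<in> occs w (s @ m)"
    using Ends_last_occ[OF Ends_append_Mlang[OF s m]] .
  show "occs w (s @ m) = insert (length (s @ m) - length w) (occs w s)"
  proof (intro equalityI subsetI)
    fix j assume "j \<in> occs w (s @ m)"
    then show "j \<in> insert (length (s @ m) - length w) (occs w s)"
      using late[of j] occs_append_early[of j w s m] by (cases "j + length w \<le> length s") auto
  qed (use new occs_append in auto)
  show "length (s @ m) - length w \<notin> occs w s"
    using occs_le[of "length (s @ m) - length w" w s] Mlang_nonempty[OF m] Ends_length[OF s] by auto
qed

lemma occs_append_Ulang:
  assumes s: "s \<in> Ends w" and u: "u \<in> Ulang w"
  shows "occs w (s @ u) = occs w s"
proof -
  obtain x0 where x0: "s = x0 @ w" using s Ends_def by blast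
  have early: "j + length w \<le> length s" if j: "j \<in> occs w (s @ u)" for j
  proof (rule ccontr)
    assume "\<not> j + length w \<le> length s"
    then have "j \<in> occs w (x0 @ w @ u)" "length x0 + length w < j + length w" using j x0 by auto
    then show False using u unfolding Ulang_def by (blast dest: occs_append_late)
  qed
  then show ?thesis using occs_append_early occs_append by blast
qed

lemma Rlang_Ends: "r \<in> Rlang w \<Longrightarrow> r \<in> Ends w"
  unfolding Rlang_def Ends_def by blast

lemma Rlang_iff_single_occ:
  "r \<in> Rlang w \<longleftrightarrow> r \<in> Ends w \<and> occs w r = {length r - length w}"
proof
  assume r: "r \<in> Rlang w"
  have "j = length r - length w" if "j \<in> occs w r" for j
    using that r unfolding occs_iff_split Rlang_def by force
  then show "r \<in> Ends w \<and> occs w r = {length r - length w}"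
    using Ends_last_occ Rlang_Ends[OF r] by blast
next
  assume r: "r \<in> Ends w \<and> occs w r = {length r - length w}"
  have "length x \<in> occs w r" if "r = x @ w @ y" for x y
    using that occs_iff_split by blast
  then show "r \<in> Rlang w" using r unfolding Rlang_def Ends_def by force
qed

lemma Nlang_iff_no_occ: "t \<in> Nlang w \<longleftrightarrow> occs w t = {}"
  unfolding Nlang_def using occs_iff_split by blast

text \<open>Splitting a word ending with w (and not in R) after its second-to-last occurrence.\<close>

lemma Ends_split_Mlang:
  assumes s: "s \<in> Ends w" and nR: "s \<notin> Rlang w"
  obtains s' m where "s = s' @ m" "s' \<in> Ends w" "m \<in> Mlang w"
proof -
  define O' where "O' = occs w s - {length s - length w}"
  have "O' \<noteq> {}" "finite O'"
    using nR s Ends_last_occ Rlang_iff_single_occ occs_finite unfolding O'_def by auto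
  then have jO: "Max O' \<in> O'" and jmax: "\<And>i. i \<in> O' \<Longrightarrow> i \<le> Max O'" by auto
  obtain x y where xy: "s = x @ w @ y" "length x = Max O'"
    using jO occs_iff_split unfolding O'_def by blast
  obtain x0 where x0: "s = x0 @ w" using s Ends_def by blast
  have y: "y \<noteq> []" using xy jO unfolding O'_def by auto
  have "length x \<le> length x0"
    using occs_le[of "Max O'" w s] jO x0 xy(2) unfolding O'_def by simp
  then have wy: "w @ y = drop (length x) x0 @ w"
    using arg_cong[OF xy(1), of "drop (length x)"] x0 by simp
  have "\<not> (w @ y = x' @ w @ y' \<and> x' \<noteq> [] \<and> y' \<noteq> [])" for x' y'
  proof
    assume e: "w @ y = x' @ w @ y' \<and> x' \<noteq> [] \<and> y' \<noteq> []"
    then have s': "s = (x @ x') @ w @ y'" using xy(1) by simp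
    then have "length (x @ x') \<in> occs w s" unfolding occs_iff_split by blast
    moreover have "length (x @ x') \<noteq> length s - length w" using s' e by simp
    ultimately have "length (x @ x') \<in> O'" unfolding O'_def by blast
    then show False using jmax xy(2) e by fastforce
  qed
  then have "y \<in> Mlang w" unfolding Mlang_def using y wy by blast
  moreover have "x @ w \<in> Ends w" unfolding Ends_def by blast
  ultimately show ?thesis using that[of "x @ w" y] xy(1) by simp
qed

lemma split_Ends_Ulang:
  assumes t: "t \<notin> Nlang w"
  obtains s u where "t = s @ u" "s \<in> Ends w" "u \<in> Ulang w"
proof -
  have "occs w t \<noteq> {}" "finite (occs w t)" using t Nlang_iff_no_occ occs_finite by auto
  then have jO: "Max (occs w t) \<in> occs w t" and jmax: "\<And>i. i \<in> occs w t \<Longrightarrow> i \<le> Max (occs w t)"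
    by auto
  obtain x y where xy: "t = x @ w @ y" "length x = Max (occs w t)" using jO occs_iff_split by blast
  have "\<not> (w @ y = x' @ w @ y' \<and> x' \<noteq> [])" for x' y'
  proof
    assume e: "w @ y = x' @ w @ y' \<and> x' \<noteq> []"
    then have "t = (x @ x') @ w @ y'" using xy(1) by simp
    then have "length (x @ x') \<in> occs w t" unfolding occs_iff_split by blast
    then show False using jmax xy(2) e by fastforce
  qed
  then have "y \<in> Ulang w" unfolding Ulang_def by blast
  moreover have "x @ w \<in> Ends w" unfolding Ends_def by blast
  ultimately show ?thesis using that[of "x @ w" y] xy(1) by simp
qed

text \<open>The factorisations above are unique: the first factor is recovered from the occurrences.\<close>

lemma Ends_same_occs_same_length:
  "s1 \<in> Ends w \<Longrightarrow> s2 \<in> Ends w \<Longrightarrow> occs w s1 = occs w s2 \<Longrightarrow> length s1 = length s2"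
  using Ends_Max_occs[of s1 w] Ends_Max_occs[of s2 w] Ends_length[of s1 w] Ends_length[of s2 w]
  by simp

lemma inj_on_append_Ends_Mlang: "inj_on (\<lambda>(s, m). s @ m) (Ends w \<times> Mlang w)"
proof (rule inj_onI, clarify)
  fix s1 m1 s2 m2
  assume a: "s1 \<in> Ends w" "m1 \<in> Mlang w" "s2 \<in> Ends w" "m2 \<in> Mlang w" "s1 @ m1 = s2 @ m2"
  have "occs w s1 = occs w s2"
    using occs_append_Mlang[OF a(1,2)] occs_append_Mlang[OF a(3,4)] a(5) by (metis Diff_insert_absorb)
  then have "length s1 = length s2" using Ends_same_occs_same_length a(1,3) by blast
  then show "s1 = s2 \<and> m1 = m2" using a(5) by (simp add: append_eq_append_conv)
qed

lemma inj_on_append_Ends_Ulang: "inj_on (\<lambda>(s, u). s @ u) (Ends w \<times> Ulang w)"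
proof (rule inj_onI, clarify)
  fix s1 u1 s2 u2
  assume a: "s1 \<in> Ends w" "u1 \<in> Ulang w" "s2 \<in> Ends w" "u2 \<in> Ulang w" "s1 @ u1 = s2 @ u2"
  have "occs w s1 = occs w s2"
    using occs_append_Ulang[OF a(1,2)] occs_append_Ulang[OF a(3,4)] a(5) by simp
  then have "length s1 = length s2" using Ends_same_occs_same_length a(1,3) by blast
  then show "s1 = s2 \<and> u1 = u2" using a(5) by (simp add: append_eq_append_conv)
qed

lemma Rlang_not_append_Mlang: "s \<in> Ends w \<Longrightarrow> m \<in> Mlang w \<Longrightarrow> s @ m \<notin> Rlang w"
  using occs_append_Mlang[of s w m] Ends_last_occ[of s w] occs_append[of _ w s m]
  unfolding Rlang_iff_single_occ by (metis insert_iff singletonD)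

lemma Klang_iff: "e \<in> Klang w \<longleftrightarrow> e \<in> Mlang w \<and> length e < length w"
proof
  assume e: "e \<in> Klang w"
  then have e0: "e \<noteq> []" "length e < length w" and "\<exists>e'. w @ e = e' @ w"
    unfolding Klang_def autocorr0_def autocorr_def by auto
  have noext: "\<not> (\<exists>c\<in>autocorr0 w. \<exists>u. u \<noteq> [] \<and> e = c @ u)"
    using e unfolding Klang_def by blast
  have "\<not> (w @ e = x @ w @ y \<and> x \<noteq> [] \<and> y \<noteq> [])" for x y
  proof
    assume xy: "w @ e = x @ w @ y \<and> x \<noteq> [] \<and> y \<noteq> []"
    then have "length (w @ e) = length (x @ w @ y)" "0 < length y" by simp_all
    then have lx: "length x < length e" by simp
    define c where "c = take (length x) e"
    have "w @ c = take (length w + length x) (w @ e)" unfolding c_def by simp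
    also have "\<dots> = x @ w" using xy by simp
    finally have "c \<in> autocorr0 w"
      unfolding autocorr0_def autocorr_def using xy lx e0 unfolding c_def by auto
    moreover have "e = c @ drop (length x) e" "drop (length x) e \<noteq> []"
      unfolding c_def using lx by auto
    ultimately show False using noext by blast
  qed
  then show "e \<in> Mlang w \<and> length e < length w"
    unfolding Mlang_def using e0 \<open>\<exists>e'. w @ e = e' @ w\<close> by blast
next
  assume m: "e \<in> Mlang w \<and> length e < length w"
  then obtain x where x: "w @ e = x @ w" "e \<noteq> []" unfolding Mlang_def by blast
  then have ac: "e \<in> autocorr0 w" unfolding autocorr0_def autocorr_def using m by auto
  have "\<not> (\<exists>c\<in>autocorr0 w. \<exists>u. u \<noteq> [] \<and> e = c @ u)"
  proof
    assume "\<exists>c\<in>autocorr0 w. \<exists>u. u \<noteq> [] \<and> e = c @ u"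
    then obtain c u c' where c: "u \<noteq> []" "e = c @ u" "c' \<noteq> []" "w @ c = c' @ w"
      unfolding autocorr0_def autocorr_def by auto
    then have "w @ e = c' @ w @ u" by simp
    then show False using m c unfolding Mlang_def by blast
  qed
  then show "e \<in> Klang w" using ac unfolding Klang_def by blast
qed


section \<open>The last clump of a word ending with w\<close>

definition count_size :: "nat \<Rightarrow> nat set set \<Rightarrow> nat" where
  "count_size k P = card {c \<in> P. card c = k}"

lemma num_kclumps_eq_count_size:
  "num_kclumps k w t = count_size k (clumps_of (length w) (occs w t))"
  unfolding num_kclumps_def count_size_def clumps_eq_clumps_of ..

lemma count_size_insert:
  assumes "finite P" "X \<notin> P"
  shows "count_size k (insert X P) = count_size k P + (if card X = k then 1 else 0)"
proof -
  have "{c \<in> insert X P. card c = k} = (if card X = k then insert X else id) {c \<in> P. card c = k}"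
    by auto
  then show ?thesis unfolding count_size_def using assms by simp
qed

definition last_clump :: "'a list \<Rightarrow> 'a list \<Rightarrow> nat set" where
  "last_clump w s = (overlap_graph (length w) (occs w s))\<^sup>* `` {length s - length w}"

definition last_size :: "'a list \<Rightarrow> 'a list \<Rightarrow> nat" where
  "last_size w s = card (last_clump w s)"

definition closed_kclumps :: "nat \<Rightarrow> 'a list \<Rightarrow> 'a list \<Rightarrow> nat" where
  "closed_kclumps k w s = count_size k (clumps_of (length w) (occs w s) - {last_clump w s})"

lemma last_clump_in:
  "s \<in> Ends w \<Longrightarrow> last_clump w s \<in> clumps_of (length w) (occs w s)"
  unfolding last_clump_def by (rule component_in_clumps_of[OF Ends_last_occ])

lemma last_clump_eq:
  assumes "s \<in> Ends w" "X \<in> clumps_of (length w) (occs w s)" "length s - length w \<in> X"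
  shows "last_clump w s = X"
  using clumps_of_eq_component[OF assms(2,3)] unfolding last_clump_def by simp

lemma last_size_pos: "s \<in> Ends w \<Longrightarrow> 1 \<le> last_size w s"
  using last_clump_in[of s w] clumps_of_nonempty clumps_of_sub occs_finite
  unfolding last_size_def by (metis One_nat_def Suc_leI card_gt_0_iff finite_subset)

lemma num_kclumps_Ends:
  assumes "s \<in> Ends w"
  shows "num_kclumps k w s = closed_kclumps k w s + (if last_size w s = k then 1 else 0)"
proof -
  let ?P = "clumps_of (length w) (occs w s)" and ?L = "last_clump w s"
  have "count_size k ?P = count_size k (insert ?L (?P - {?L}))"
    using last_clump_in[OF assms] by (simp add: insert_absorb)
  also have "\<dots> = count_size k (?P - {?L}) + (if card ?L = k then 1 else 0)"
    using clumps_of_finite[OF occs_finite] by (intro count_size_insert) auto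
  finally show ?thesis
    unfolding num_kclumps_eq_count_size closed_kclumps_def last_size_def .
qed

lemma num_kclumps_Nlang: "t \<in> Nlang w \<Longrightarrow> num_kclumps k w t = 0"
  unfolding num_kclumps_eq_count_size Nlang_iff_no_occ count_size_def
  by (simp add: clumps_of_empty)

lemma num_kclumps_append_Ulang:
  "s \<in> Ends w \<Longrightarrow> u \<in> Ulang w \<Longrightarrow> num_kclumps k w (s @ u) = num_kclumps k w s"
  unfolding num_kclumps_eq_count_size by (simp only: occs_append_Ulang)

text \<open>A word of R has a single occurrence, hence a single clump of size one.\<close>

lemma Rlang_last_clump:
  assumes r: "r \<in> Rlang w" and l: "0 < length w"
  shows "last_size w r = 1" "closed_kclumps k w r = 0"
proof -
  define q where "q = length r - length w"
  have E: "r \<in> Ends w" and o: "occs w r = {q}" using r Rlang_iff_single_occ q_def by auto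
  have c: "clumps_of (length w) (occs w r) = {{q}}"
    using clumps_of_insert_isolated[of "{}" "length w" q] l o clumps_of_empty by simp
  have "last_clump w r = {q}" using last_clump_eq[OF E, of "{q}"] c q_def by simp
  then show "last_size w r = 1" "closed_kclumps k w r = 0"
    unfolding last_size_def closed_kclumps_def count_size_def c by simp_all
qed

lemma append_long_Mlang_last_clump:
  assumes s: "s \<in> Ends w" and m: "m \<in> Mlang w" "length w \<le> length m" and l: "0 < length w"
  shows "last_size w (s @ m) = 1" "closed_kclumps k w (s @ m) = num_kclumps k w s"
proof -
  define p where "p = length (s @ m) - length w"
  have far: "x + length w \<le> p" if "x \<in> occs w s" for x
    using occs_le[OF that] m(2) unfolding p_def by simp
  have c: "clumps_of (length w) (occs w (s @ m)) = insert {p} (clumps_of (length w) (occs w s))"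
    unfolding occs_append_Mlang(1)[OF s m(1)] p_def[symmetric]
    by (rule clumps_of_insert_isolated[OF far l])
  have last: "last_clump w (s @ m) = {p}"
    using last_clump_eq[OF Ends_append_Mlang[OF s m(1)], of "{p}"] c p_def by simp
  then show "last_size w (s @ m) = 1" unfolding last_size_def by simp
  have "{p} \<notin> clumps_of (length w) (occs w s)"
    using clumps_of_sub occs_append_Mlang(2)[OF s m(1)] p_def by blast
  then show "closed_kclumps k w (s @ m) = num_kclumps k w s"
    unfolding closed_kclumps_def num_kclumps_eq_count_size c last by simp
qed

lemma append_Klang_last_clump:
  assumes s: "s \<in> Ends w" and m: "m \<in> Klang w"
  shows "last_size w (s @ m) = last_size w s + 1" "closed_kclumps k w (s @ m) = closed_kclumps k w s"
proof -
  have mM: "m \<in> Mlang w" and lm: "length m < length w" using m Klang_iff by auto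
  define p where "p = length (s @ m) - length w"
  define q where "q = length s - length w"
  define C where "C = last_clump w s"
  have q: "q \<in> occs w s" "\<And>x. x \<in> occs w s \<Longrightarrow> x \<le> q"
    using Ends_last_occ[OF s] occs_le unfolding q_def by fastforce+
  have "0 < length m" using Mlang_nonempty[OF mM] by simp
  then have qp: "q < p" "p < q + length w"
    using Ends_length[OF s] lm unfolding p_def q_def length_append by linarith+
  have c: "clumps_of (length w) (occs w (s @ m))
      = insert (insert p C) (clumps_of (length w) (occs w s) - {C})"
    unfolding occs_append_Mlang(1)[OF s mM] p_def[symmetric] C_def last_clump_def q_def[symmetric]
    by (rule clumps_of_insert_adjacent[OF q qp])
  have last: "last_clump w (s @ m) = insert p C"
    using last_clump_eq[OF Ends_append_Mlang[OF s mM], of "insert p C"] c p_def by simp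
  have p_new: "p \<notin> occs w s" using occs_append_Mlang(2)[OF s mM] p_def by simp
  have C_sub: "C \<subseteq> occs w s" using last_clump_in[OF s] clumps_of_sub unfolding C_def by blast
  then have "p \<notin> C" "finite C" using p_new occs_finite finite_subset by blast+
  then show "last_size w (s @ m) = last_size w s + 1" unfolding last_size_def last C_def by simp
  have "insert p C \<notin> clumps_of (length w) (occs w s)" using clumps_of_sub p_new by blast
  then have "clumps_of (length w) (occs w (s @ m)) - {last_clump w (s @ m)}
      = clumps_of (length w) (occs w s) - {C}"
    unfolding c last by auto
  then show "closed_kclumps k w (s @ m) = closed_kclumps k w s"
    unfolding closed_kclumps_def C_def by simp
qed

lemma Ends_split_by_last_size:
  assumes s: "s \<in> Ends w" "s \<notin> Rlang w" and l: "0 < length w"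
  obtains s' m where "s = s' @ m" "s' \<in> Ends w" "m \<in> Klang w" "1 < last_size w s"
    | s' m where "s = s' @ m" "s' \<in> Ends w" "m \<in> Mlang w - Klang w" "last_size w s = 1"
proof -
  obtain s' m where d: "s = s' @ m" "s' \<in> Ends w" "m \<in> Mlang w"
    using Ends_split_Mlang[OF s] by blast
  show thesis
  proof (cases "m \<in> Klang w")
    case True
    then show thesis
      using that(1)[OF d(1,2) True] append_Klang_last_clump(1)[OF d(2) True] last_size_pos[OF d(2)]
        d(1) by simp
  next
    case False
    then have "length w \<le> length m" using d(3) Klang_iff by fastforce
    then show thesis
      using that(2)[OF d(1,2)] append_long_Mlang_last_clump(1)[OF d(2,3) _ l] d(1) d(3) False
      by simp
  qed
qed


section \<open>Weighted generating functions of languages\<close>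

definition wgf :: "('a::finite list \<Rightarrow> complex) \<Rightarrow> 'a list set \<Rightarrow> complex fps" where
  "wgf f L = Abs_fps (\<lambda>n. \<Sum>x\<in>{x\<in>L. length x = n}. f x)"

lemma finite_words_of_length: "finite {x::'a::finite list. x \<in> L \<and> length x = n}"
  by (rule finite_subset[OF _ finite_lists_length_eq[of "UNIV :: 'a set" n]]) auto

lemma wgf_nth: "wgf f L $ n = (\<Sum>x\<in>{x\<in>L. length x = n}. f x)"
  unfolding wgf_def by simp

lemma lang_gf_eq_wgf: "lang_gf p L = wgf (\<lambda>x. of_real (wprob p x)) L"
  unfolding lang_gf_def wgf_def by simp

lemma wgf_cong: "(\<And>x. x \<in> L \<Longrightarrow> f x = g x) \<Longrightarrow> wgf f L = wgf g L"
  unfolding wgf_def by (intro arg_cong[where f = Abs_fps] ext sum.cong) auto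

lemma wgf_const_mult: "wgf (\<lambda>x. c * f x) L = fps_const c * wgf f L"
  by (rule fps_ext) (simp add: wgf_nth sum_distrib_left)

lemma wgf_union:
  assumes "A \<inter> B = {}"
  shows "wgf f (A \<union> B) = wgf f A + wgf f B"
proof (rule fps_ext)
  fix n
  have "{x \<in> A \<union> B. length x = n} = {x \<in> A. length x = n} \<union> {x \<in> B. length x = n}" by auto
  then show "wgf f (A \<union> B) $ n = (wgf f A + wgf f B) $ n"
    using sum.union_disjoint[OF finite_words_of_length finite_words_of_length, of A n B n f] assms
    by (auto simp: wgf_nth)
qed

lemma wgf_diff:
  assumes "B \<subseteq> A"
  shows "wgf f (A - B) = wgf f A - wgf f B"
proof -
  have partition: "(A - B) \<union> B = A" using assms by blast
  have "wgf f A = wgf f (A - B) + wgf f B"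
    by (rule wgf_union[of "A - B" B f, unfolded partition]) blast
  then show ?thesis by simp
qed

lemma wgf_concat:
  assumes inj: "inj_on (\<lambda>(x, y). x @ y) (A \<times> B)"
    and f: "\<And>x y. x \<in> A \<Longrightarrow> y \<in> B \<Longrightarrow> f (x @ y) = g x * h y"
  shows "wgf f ((\<lambda>(x, y). x @ y) ` (A \<times> B)) = wgf g A * wgf h B"
proof (rule fps_ext)
  fix n
  let ?cat = "\<lambda>(x, y). x @ y"
  define S where "S = {(x, y). x \<in> A \<and> y \<in> B \<and> length x + length y = n}"
  have S_eq: "S = (\<Union>i\<in>{0..n}. {x\<in>A. length x = i} \<times> {y\<in>B. length y = n - i})"
    unfolding S_def by auto
  have img: "{z \<in> ?cat ` (A \<times> B). length z = n} = ?cat ` S" unfolding S_def by force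
  have injS: "inj_on ?cat S" using inj by (rule inj_on_subset) (auto simp: S_def)
  have "wgf f (?cat ` (A \<times> B)) $ n = (\<Sum>z\<in>S. f (?cat z))"
    unfolding wgf_nth img by (rule sum.reindex[OF injS, unfolded comp_def])
  also have "\<dots> = (\<Sum>z\<in>S. g (fst z) * h (snd z))" by (rule sum.cong) (auto simp: S_def f)
  also have "\<dots> = (\<Sum>i=0..n. \<Sum>z\<in>{x\<in>A. length x = i} \<times> {y\<in>B. length y = n - i}. g (fst z) * h (snd z))"
    unfolding S_eq by (rule sum.UNION_disjoint) (auto simp: finite_words_of_length)
  also have "\<dots> = (wgf g A * wgf h B) $ n"
    by (simp add: fps_mult_nth wgf_nth sum_product sum.cartesian_product case_prod_beta)
  finally show "wgf f (?cat ` (A \<times> B)) $ n = (wgf g A * wgf h B) $ n" .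
qed

lemma wprob_append: "wprob p (x @ y) = wprob p x * wprob p y"
  unfolding wprob_def by simp

lemma concat_image_iff: "t \<in> (\<lambda>(x, y). x @ y) ` (A \<times> B) \<longleftrightarrow> (\<exists>s\<in>A. \<exists>u\<in>B. t = s @ u)"
  by force

lemma lang_gf_nth_below_min_length:
  assumes "\<And>x. x \<in> L \<Longrightarrow> n \<le> length x" "i < n"
  shows "lang_gf p L $ i = 0"
proof -
  have none: "{x \<in> L. length x = i} = {}" using assms by fastforce
  show ?thesis unfolding lang_gf_def fps_nth_Abs_fps none by simp
qed


section \<open>The equations between the series\<close>

definition clump_weight :: "('a \<Rightarrow> real) \<Rightarrow> nat \<Rightarrow> 'a list \<Rightarrow> complex \<Rightarrow> 'a list \<Rightarrow> complex" where
  "clump_weight p k w v t = of_real (wprob p t) * v ^ num_kclumps k w t"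

definition closed_weight :: "('a \<Rightarrow> real) \<Rightarrow> nat \<Rightarrow> 'a list \<Rightarrow> complex \<Rightarrow> 'a list \<Rightarrow> complex" where
  "closed_weight p k w v t = of_real (wprob p t) * v ^ closed_kclumps k w t"

definition Ends_size :: "'a list \<Rightarrow> nat \<Rightarrow> 'a list set" where
  "Ends_size w j = {s \<in> Ends w. last_size w s = j}"

lemma kclump_series_eq_wgf:
  fixes p :: "'a::finite \<Rightarrow> real"
  shows "Abs_fps (\<lambda>n. \<Sum>i. of_real (kclump_prob p w k n i) * v ^ i) = wgf (clump_weight p k w v) UNIV"
proof (rule fps_ext)
  fix n
  define T where "T = {t::'a list. length t = n}"
  have fT: "finite T" using finite_words_of_length[of UNIV n] unfolding T_def by simp
  let ?I = "num_kclumps k w ` T"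
  have "of_real (kclump_prob p w k n i) * v ^ i
      = (\<Sum>t\<in>{t\<in>T. num_kclumps k w t = i}. clump_weight p k w v t)" for i
    unfolding kclump_prob_def T_def clump_weight_def of_real_sum sum_distrib_right
    by (rule sum.cong) auto
  moreover have "(\<Sum>t\<in>{t\<in>T. num_kclumps k w t = i}. clump_weight p k w v t) = 0" if "i \<notin> ?I" for i
    using that by (intro sum.neutral) auto
  ultimately have "(\<Sum>i. of_real (kclump_prob p w k n i) * v ^ i)
      = (\<Sum>i\<in>?I. \<Sum>t\<in>{t\<in>T. num_kclumps k w t = i}. clump_weight p k w v t)"
    using suminf_finite[of ?I "\<lambda>i. \<Sum>t\<in>{t\<in>T. num_kclumps k w t = i}. clump_weight p k w v t"] fT
    by simp
  also have "\<dots> = (\<Sum>t\<in>T. clump_weight p k w v t)" by (rule sum.image_gen[OF fT, symmetric])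
  finally show "Abs_fps (\<lambda>n. \<Sum>i. of_real (kclump_prob p w k n i) * v ^ i) $ n
      = wgf (clump_weight p k w v) UNIV $ n"
    unfolding wgf_nth T_def by simp
qed

text \<open>A text either avoids w or splits after its last occurrence: T = N + H U.\<close>

lemma total_eq:
  fixes p :: "'a::finite \<Rightarrow> real"
  shows "wgf (clump_weight p k w v) UNIV
    = lang_gf p (Nlang w) + wgf (clump_weight p k w v) (Ends w) * lang_gf p (Ulang w)"
proof -
  let ?EU = "(\<lambda>(x, y). x @ y) ` (Ends w \<times> Ulang w)"
  have "t \<in> Nlang w \<union> ?EU" for t
  proof (cases "t \<in> Nlang w")
    case False
    then obtain s u where "t = s @ u" "s \<in> Ends w" "u \<in> Ulang w" by (rule split_Ends_Ulang)
    then have "t \<in> ?EU" unfolding concat_image_iff by blast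
    then show ?thesis by blast
  qed simp
  then have cover: "Nlang w \<union> ?EU = UNIV" by blast
  have disjoint: "Nlang w \<inter> ?EU = {}"
  proof (intro equals0I)
    fix t assume t: "t \<in> Nlang w \<inter> ?EU"
    then obtain s u where "s \<in> Ends w" "u \<in> Ulang w" "t = s @ u"
      unfolding Int_iff concat_image_iff by blast
    moreover have "occs w t = {}" using t Nlang_iff_no_occ by blast
    ultimately show False using occs_append_Ulang[of s w u] Ends_last_occ[of s w] by simp
  qed
  have "wgf (clump_weight p k w v) UNIV
      = wgf (clump_weight p k w v) (Nlang w) + wgf (clump_weight p k w v) ?EU"
    by (rule wgf_union[OF disjoint, unfolded cover])
  also have "wgf (clump_weight p k w v) (Nlang w) = lang_gf p (Nlang w)"
    unfolding lang_gf_eq_wgf by (rule wgf_cong) (simp add: clump_weight_def num_kclumps_Nlang)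
  also have "wgf (clump_weight p k w v) ?EU = wgf (clump_weight p k w v) (Ends w) * lang_gf p (Ulang w)"
    unfolding lang_gf_eq_wgf
    by (rule wgf_concat[OF inj_on_append_Ends_Ulang])
      (simp add: clump_weight_def wprob_append num_kclumps_append_Ulang)
  finally show ?thesis .
qed

lemma Ends_append_Klang: "s \<in> Ends w \<Longrightarrow> m \<in> Klang w \<Longrightarrow> s @ m \<in> Ends w"
  using Ends_append_Mlang Klang_iff by blast

lemma inj_on_append_Ends_Klang: "A \<subseteq> Ends w \<Longrightarrow> inj_on (\<lambda>(s, m). s @ m) (A \<times> Klang w)"
  by (rule inj_on_subset[OF inj_on_append_Ends_Mlang]) (use Klang_iff in auto)

lemma Rlang_last_size: "r \<in> Rlang w \<Longrightarrow> 0 < length w \<Longrightarrow> r \<in> Ends_size w 1"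
  using Rlang_last_clump(1) Rlang_Ends unfolding Ends_size_def by blast

text \<open>Words ending with w whose last clump has at least two occurrences: A = G + A K.\<close>

lemma closed_series_eq:
  fixes p :: "'a::finite \<Rightarrow> real"
  assumes l: "0 < length w"
  shows "wgf (closed_weight p k w v) (Ends w)
    = wgf (closed_weight p k w v) (Ends_size w 1) + wgf (closed_weight p k w v) (Ends w) * lang_gf p (Klang w)"
proof -
  let ?EK = "(\<lambda>(x, y). x @ y) ` (Ends w \<times> Klang w)"
  have "Ends w - Ends_size w 1 = ?EK"
  proof (intro equalityI subsetI)
    fix s assume s: "s \<in> Ends w - Ends_size w 1"
    then have "s \<notin> Rlang w" using Rlang_last_size l by blast
    then show "s \<in> ?EK"
      using s by (cases rule: Ends_split_by_last_size[OF _ _ l]) (auto simp: Ends_size_def)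
  next
    fix s assume "s \<in> ?EK"
    then show "s \<in> Ends w - Ends_size w 1"
      using Ends_append_Klang append_Klang_last_clump(1) last_size_pos
      unfolding Ends_size_def concat_image_iff by fastforce
  qed
  then have partition: "Ends_size w 1 \<union> ?EK = Ends w"
    unfolding Ends_size_def by blast
  have "wgf (closed_weight p k w v) (Ends w)
      = wgf (closed_weight p k w v) (Ends_size w 1) + wgf (closed_weight p k w v) ?EK"
    by (rule wgf_union[of "Ends_size w 1" ?EK, unfolded partition])
      (use \<open>Ends w - Ends_size w 1 = ?EK\<close> in blast)
  also have "wgf (closed_weight p k w v) ?EK
      = wgf (closed_weight p k w v) (Ends w) * lang_gf p (Klang w)"
    unfolding lang_gf_eq_wgf
    by (rule wgf_concat[OF inj_on_append_Ends_Klang[OF subset_refl]])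
      (simp add: closed_weight_def wprob_append append_Klang_last_clump(2))
  finally show ?thesis .
qed


lemma Mlang_minus_Klang_long:
  assumes "m \<in> Mlang w - Klang w"
  shows "m \<in> Mlang w" "length w \<le> length m"
  using assms Klang_iff[of m w] by auto

lemma lang_gf_Mlang_minus_Klang:
  fixes p :: "'a::finite \<Rightarrow> real"
  shows "lang_gf p (Mlang w - Klang w) = lang_gf p (Mlang w) - lang_gf p (Klang w)"
  unfolding lang_gf_eq_wgf by (rule wgf_diff) (use Klang_iff in blast)

text \<open>Words whose last clump is a single occurrence are the words of R together with the words
  s @ m, m a long word of M, whose closed clumps are all clumps of s: G = R + H (M - K).\<close>

lemma first_clump_eq:
  fixes p :: "'a::finite \<Rightarrow> real"
  assumes l: "0 < length w"
  shows "wgf (closed_weight p k w v) (Ends_size w 1)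
    = lang_gf p (Rlang w) + wgf (clump_weight p k w v) (Ends w) * (lang_gf p (Mlang w) - lang_gf p (Klang w))"
proof -
  let ?EM = "(\<lambda>(x, y). x @ y) ` (Ends w \<times> (Mlang w - Klang w))"
  have cover: "Rlang w \<union> ?EM = Ends_size w 1"
  proof (intro equalityI subsetI)
    fix s assume "s \<in> Ends_size w 1"
    then have s: "s \<in> Ends w" "last_size w s = 1" unfolding Ends_size_def by auto
    show "s \<in> Rlang w \<union> ?EM"
    proof (cases "s \<in> Rlang w")
      case False
      then show ?thesis
        using s by (cases rule: Ends_split_by_last_size[OF s(1) _ l]) (auto simp: concat_image_iff)
    qed simp
  next
    fix s assume "s \<in> Rlang w \<union> ?EM"
    then show "s \<in> Ends_size w 1"
      using Rlang_last_size[OF _ l] Ends_append_Mlang append_long_Mlang_last_clump(1)[OF _ _ _ l]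
        Mlang_minus_Klang_long
      unfolding concat_image_iff Ends_size_def by fastforce
  qed
  have disjoint: "Rlang w \<inter> ?EM = {}"
    using Rlang_not_append_Mlang unfolding concat_image_iff by fastforce
  have inj: "inj_on (\<lambda>(x, y). x @ y) (Ends w \<times> (Mlang w - Klang w))"
    by (rule inj_on_subset[OF inj_on_append_Ends_Mlang]) blast
  have "wgf (closed_weight p k w v) (Ends_size w 1)
      = wgf (closed_weight p k w v) (Rlang w) + wgf (closed_weight p k w v) ?EM"
    by (rule wgf_union[OF disjoint, unfolded cover])
  also have "wgf (closed_weight p k w v) (Rlang w) = lang_gf p (Rlang w)"
    unfolding lang_gf_eq_wgf
    by (rule wgf_cong) (simp add: closed_weight_def Rlang_last_clump(2)[OF _ l])
  also have "wgf (closed_weight p k w v) ?EM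
      = wgf (clump_weight p k w v) (Ends w) * lang_gf p (Mlang w - Klang w)"
    unfolding lang_gf_eq_wgf
    by (rule wgf_concat[OF inj])
      (simp add: closed_weight_def clump_weight_def wprob_append append_long_Mlang_last_clump(2)[OF _ Mlang_minus_Klang_long l])
  finally show ?thesis unfolding lang_gf_Mlang_minus_Klang .
qed

lemma Ends_size_Suc:
  assumes l: "0 < length w" and j: "1 \<le> j"
  shows "Ends_size w (Suc j) = (\<lambda>(x, y). x @ y) ` (Ends_size w j \<times> Klang w)"
proof (intro equalityI subsetI)
  fix s assume "s \<in> Ends_size w (Suc j)"
  then have s: "s \<in> Ends w" "last_size w s = Suc j" unfolding Ends_size_def by auto
  have nR: "s \<notin> Rlang w" using Rlang_last_size[OF _ l] s j unfolding Ends_size_def by auto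
  show "s \<in> (\<lambda>(x, y). x @ y) ` (Ends_size w j \<times> Klang w)"
  proof (rule Ends_split_by_last_size[OF s(1) nR l])
    fix s' m assume d: "s = s' @ m" "s' \<in> Ends w" "m \<in> Klang w"
    then have "last_size w s' = j" using append_Klang_last_clump(1)[of s' w m] s by simp
    then show ?thesis using d unfolding concat_image_iff Ends_size_def by blast
  next
    assume "last_size w s = 1"
    then show ?thesis using s j by simp
  qed
next
  fix s assume "s \<in> (\<lambda>(x, y). x @ y) ` (Ends_size w j \<times> Klang w)"
  then show "s \<in> Ends_size w (Suc j)"
    using Ends_append_Klang append_Klang_last_clump(1)
    unfolding concat_image_iff Ends_size_def by fastforce
qed

lemma last_size_series:
  fixes p :: "'a::finite \<Rightarrow> real"
  assumes l: "0 < length w" and j: "1 \<le> j"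
  shows "wgf (closed_weight p k w v) (Ends_size w j)
    = wgf (closed_weight p k w v) (Ends_size w 1) * lang_gf p (Klang w) ^ (j - 1)"
  using j
proof (induction j rule: dec_induct)
  case (step j)
  have "wgf (closed_weight p k w v) (Ends_size w (Suc j))
      = wgf (closed_weight p k w v) (Ends_size w j) * lang_gf p (Klang w)"
    unfolding Ends_size_Suc[OF l step.hyps(1)] lang_gf_eq_wgf
    by (rule wgf_concat[OF inj_on_append_Ends_Klang])
      (auto simp: Ends_size_def closed_weight_def wprob_append append_Klang_last_clump(2))
  then show ?case using step.IH step.hyps(1) by (simp add: power_eq_if mult_ac)
qed simp

text \<open>Counting the last clump as well only changes the weight of the words whose last clump
  is a k-clump: H = A + (v - 1) G_k.\<close>

lemma clump_series_eq:
  fixes p :: "'a::finite \<Rightarrow> real"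
  shows "wgf (clump_weight p k w v) (Ends w)
    = wgf (closed_weight p k w v) (Ends w) + fps_const (v - 1) * wgf (closed_weight p k w v) (Ends_size w k)"
proof -
  let ?f = "closed_weight p k w v" and ?B = "Ends_size w k"
  have sub: "?B \<subseteq> Ends w" unfolding Ends_size_def by blast
  have "wgf (clump_weight p k w v) (Ends w)
      = wgf (clump_weight p k w v) (Ends w - ?B) + wgf (clump_weight p k w v) ?B"
    by (rule wgf_union[of "Ends w - ?B" ?B, unfolded Un_Diff_cancel2 Un_absorb2[OF sub]]) blast
  also have "wgf (clump_weight p k w v) (Ends w - ?B) = wgf ?f (Ends w - ?B)"
    by (rule wgf_cong) (simp add: clump_weight_def closed_weight_def num_kclumps_Ends Ends_size_def)
  also have "wgf (clump_weight p k w v) ?B = wgf (\<lambda>x. v * ?f x) ?B"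
    by (rule wgf_cong)
      (simp add: clump_weight_def closed_weight_def num_kclumps_Ends Ends_size_def mult_ac)
  finally show ?thesis
    unfolding wgf_const_mult wgf_diff[OF sub] fps_const_sub[symmetric]
    by (simp add: algebra_simps)
qed


section \<open>Solving the system and the theorem\<close>

lemma fps_solve_linear:
  fixes A B X :: "'a::field fps"
  assumes eq: "A = B + A * X" and X0: "X $ 0 = 0"
  shows "A = B * (1 / (1 - X))"
proof -
  have unit: "(1 - X) $ 0 \<noteq> 0" using X0 by simp
  have "A * (1 - X) = B" using eq by (simp add: algebra_simps)
  then have "B * (1 / (1 - X)) = A * ((1 - X) * inverse (1 - X))"
    using fps_divide_unit[OF unit, of 1] by (simp add: mult.assoc)
  then show ?thesis using inverse_mult_eq_1'[OF unit] by simp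
qed

lemma clump_system_solution:
  fixes T N U H A G R K X :: "'a::field fps" and c :: 'a
  assumes total: "T = N + H * U"
    and weights: "H = A + fps_const c * (G * K ^ (k - 1))"
    and last_clump: "A = G + A * K"
    and first_clump: "G = R + H * X"
    and K0: "K $ 0 = 0" and X0: "X $ 0 = 0"
  defines "Q \<equiv> 1 / (1 - K) + fps_const c * K ^ (k - 1)"
  shows "T = N + R * Q * (1 / (1 - X * Q)) * U"
proof -
  have "A = G * (1 / (1 - K))" using fps_solve_linear[OF last_clump K0] .
  then have HQ: "H = G * Q" unfolding weights Q_def by (simp add: algebra_simps)
  have "G = R + G * (X * Q)" using first_clump HQ by (simp add: ac_simps)
  moreover have "(X * Q) $ 0 = 0" using X0 by simp
  ultimately have "G = R * (1 / (1 - X * Q))" by (rule fps_solve_linear)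
  then show ?thesis using total HQ by (simp add: ac_simps)
qed

text \<open>Dividing by pi_w z^l is exact for series of order at least l.\<close>

lemma fps_div_mult_cancel:
  fixes A P Q :: "'a::field fps"
  assumes "P \<noteq> 0" and "\<And>i. i < subdegree P \<Longrightarrow> A $ i = 0"
  shows "A / P * (P * Q) = A * Q"
proof (cases "A = 0")
  case False
  then have "subdegree P \<le> subdegree A" using assms(2) by (intro subdegree_geI) auto
  then have "A / P * P = A" using assms(1) by (intro fps_times_divide_eq) auto
  then show ?thesis by (metis mult.assoc)
qed simp

lemma piz_props:
  assumes "\<forall>a. p a > 0"
  shows "piz p w \<noteq> 0" "subdegree (piz p w) = length w"
proof -
  have "wprob p w > 0" unfolding wprob_def using assms by (induction w) auto
  then show "piz p w \<noteq> 0" "subdegree (piz p w) = length w"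
    unfolding piz_def by (simp_all add: fps_X_power_subdegree)
qed

theorem mainTheorem7:
  fixes p :: "'a::finite \<Rightarrow> real" and w :: "'a list" and k :: nat and v :: complex
  assumes "card (UNIV :: 'a set) \<ge> 2"
    and "\<forall>a. p a > 0"
    and "(\<Sum>a\<in>UNIV. p a) = 1"
    and "length w \<ge> 2"
    and "k \<ge> 1"
  shows "Abs_fps (\<lambda>n. \<Sum>i. of_real (kclump_prob p w k n i) * v ^ i)
    = lang_gf p (Nlang w)
      + lang_gf p (Rlang w) / piz p w * frakK p w k v
        * (1 / (1 - (lang_gf p (Mlang w) - lang_gf p (Klang w)) / piz p w * frakK p w k v))
        * lang_gf p (Ulang w)"
proof -
  have l: "0 < length w" using assms(4) by linarith
  let ?K = "lang_gf p (Klang w)" and ?X = "lang_gf p (Mlang w) - lang_gf p (Klang w)"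
  let ?Q = "1 / (1 - ?K) + fps_const (v - 1) * ?K ^ (k - 1)"
  have K0: "?K $ 0 = 0"
    by (rule lang_gf_nth_below_min_length[of _ 1]) (auto simp: Klang_def autocorr0_def Suc_le_eq)
  have X_low: "?X $ i = 0" if "i < length w" for i
    unfolding lang_gf_Mlang_minus_Klang[symmetric]
    by (rule lang_gf_nth_below_min_length[OF _ that]) (rule Mlang_minus_Klang_long(2))
  have R_low: "lang_gf p (Rlang w) $ i = 0" if "i < length w" for i
    by (rule lang_gf_nth_below_min_length[OF _ that]) (use Rlang_Ends Ends_length in blast)
  have "Abs_fps (\<lambda>n. \<Sum>i. of_real (kclump_prob p w k n i) * v ^ i)
      = lang_gf p (Nlang w) + lang_gf p (Rlang w) * ?Q * (1 / (1 - ?X * ?Q)) * lang_gf p (Ulang w)"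
    by (rule clump_system_solution[OF trans[OF kclump_series_eq_wgf total_eq]
          clump_series_eq[of p k w v, unfolded last_size_series[OF l assms(5)]]
          closed_series_eq[OF l] first_clump_eq[OF l] K0 X_low[OF l]])
  moreover have "F / piz p w * frakK p w k v = F * ?Q"
    if "\<And>i. i < length w \<Longrightarrow> F $ i = 0" for F
    unfolding frakK_def using that piz_props[OF assms(2)] by (intro fps_div_mult_cancel) simp_all
  ultimately show ?thesis using R_low X_low by simp
qed


end
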